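(* If $G\subset\mathbb{R}^2$ is (the open domain bounded by) a rhombus with smallest angle $\alpha$, then \[ A_G\ge\frac{2}{\sin\frac{\alpha}{2}}. \]
   Context: For a domain $G\subsetneq\mathbb{R}^n$ let $d_G(x)=d(x,\partial G)$; $k_G(x,y)=\inf_\gamma\int_\gamma\frac{|dx|}{d_G(x)}$ over rectifiable curves $\gamma\subset G$ joining $x,y$ (quasihyperbolic distance); $j_G(x,y)=\log\left(1+\frac{|x-y|}{\min\{d_G(x),d_G(y)\}}\right)$; and the uniformity constant is $A_G=\inf\{A\ge1: k_G\le A\,j_G\text{ on }G\times G\}$ (with $\inf\emptyset=+\infty$). *)

theory Defs
  imports "HOL-Analysis.Analysis"
begin

type_synonym R2 = "real ^ 2"

definition dG :: "R2 set \<Rightarrow> R2 \<Rightarrow> real" where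
  "dG G x = infdist x (frontier G)"

definition qh_length :: "R2 set \<Rightarrow> (real \<Rightarrow> R2) \<Rightarrow> real" where
  "qh_length G g = integral {0..1} (\<lambda>t. norm (vector_derivative g (at t)) / dG G (g t))"

definition qh_admissible :: "R2 set \<Rightarrow> R2 \<Rightarrow> R2 \<Rightarrow> (real \<Rightarrow> R2) \<Rightarrow> bool" where
  "qh_admissible G x y g \<longleftrightarrow> path g \<and> g piecewise_C1_differentiable_on {0..1}
     \<and> path_image g \<subseteq> G \<and> pathstart g = x \<and> pathfinish g = y
     \<and> (\<lambda>t. norm (vector_derivative g (at t)) / dG G (g t)) integrable_on {0..1}"

definition kG :: "R2 set \<Rightarrow> R2 \<Rightarrow> R2 \<Rightarrow> real" where
  "kG G x y = Inf {qh_length G g | g. qh_admissible G x y g}"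

definition jG :: "R2 set \<Rightarrow> R2 \<Rightarrow> R2 \<Rightarrow> real" where
  "jG G x y = ln (1 + dist x y / min (dG G x) (dG G y))"

text \<open>Uniformity constant A_G (Inf of the empty set is +infinity).\<close>
definition uniformity_constant :: "R2 set \<Rightarrow> ereal" where
  "uniformity_constant G =
     Inf (ereal ` {A. 1 \<le> A \<and> (\<forall>x\<in>G. \<forall>y\<in>G. kG G x y \<le> A * jG G x y)})"

definition vec_angle :: "R2 \<Rightarrow> R2 \<Rightarrow> real" where
  "vec_angle a b = arccos (inner a b / (norm a * norm b))"

definition rhombus_domain :: "R2 set \<Rightarrow> real \<Rightarrow> bool" where
  "rhombus_domain G \<alpha> \<longleftrightarrow> (\<exists>p a b. a \<noteq> 0 \<and> norm a = norm b
     \<and> 0 < vec_angle a b \<and> vec_angle a b < pi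
     \<and> G = interior (convex hull {p, p + a, p + a + b, p + b})
     \<and> \<alpha> = min (vec_angle a b) (pi - vec_angle a b))"

end

theory Submission
  imports Defs
begin

text \<open>Let \<open>\<theta>\<close> be the angle of the rhombus at a vertex \<open>v\<close>. Every \<open>z \<in> G\<close> lies within
  \<open>sin (\<theta>/2) |z - v|\<close> of one of the two lines carrying the sides at \<open>v\<close>, and these lines
  miss \<open>G\<close>; so \<open>d\<^sub>G(z) \<le> sin (\<theta>/2) |z - v|\<close>, and along any path \<open>ln |\<gamma> - v|\<close> changes by at
  most \<open>sin (\<theta>/2)\<close> times the quasihyperbolic length. The opposite vertex \<open>w\<close> has the same
  angle. A path from a point at distance \<open>\<epsilon> |v - w|\<close> of \<open>v\<close> to one at distance
  \<open>\<epsilon> |v - w|\<close> of \<open>w\<close> passes through a point equidistant from \<open>v\<close> and \<open>w\<close>, so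
  \<open>k\<^sub>G \<ge> (2 / sin (\<theta>/2)) ln (1 / (2 \<epsilon>))\<close>, while \<open>j\<^sub>G \<le> ln (1/\<epsilon>) + O(1)\<close>.
  Letting \<open>\<epsilon> \<rightarrow> 0\<close> gives \<open>A\<^sub>G \<ge> 2 / sin (\<theta>/2)\<close> for both angles of the rhombus.\<close>

definition cross2 :: "real^2 \<Rightarrow> real^2 \<Rightarrow> real" where
  "cross2 u v = u$1 * v$2 - u$2 * v$1"

lemma inner_vec2: "inner (x::real^2) y = x$1 * y$1 + x$2 * y$2"
  by (simp add: inner_vec_def sum_2)

lemma inner_sq_add_cross2_sq: "(inner u v)\<^sup>2 + (cross2 u v)\<^sup>2 = (norm u)\<^sup>2 * (norm v)\<^sup>2"
  unfolding power2_norm_eq_inner inner_vec2 cross2_def by (simp add: power2_eq_square algebra_simps)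

lemma abs_cross2_le: "\<bar>cross2 u v\<bar> \<le> norm u * norm v"
proof (rule power2_le_imp_le)
  show "\<bar>cross2 u v\<bar>\<^sup>2 \<le> (norm u * norm v)\<^sup>2"
    unfolding power_mult_distrib power2_abs
    using inner_sq_add_cross2_sq[of u v] zero_le_power2[of "inner u v"] by linarith
qed simp

lemma abs_inner_lt_of_cross2_nonzero:
  assumes "cross2 u v \<noteq> 0" shows "\<bar>inner u v\<bar> < norm u * norm v"
proof (rule power2_less_imp_less)
  have "0 < (cross2 u v)\<^sup>2"
    using assms by simp
  then show "\<bar>inner u v\<bar>\<^sup>2 < (norm u * norm v)\<^sup>2"
    unfolding power_mult_distrib power2_abs using inner_sq_add_cross2_sq[of u v] by linarith
qed simp

lemma cross2_commute: "cross2 v u = - cross2 u v"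
  by (simp add: cross2_def)

lemma cross2_add_left: "cross2 (x + y) v = cross2 x v + cross2 y v"
  by (simp add: cross2_def algebra_simps)

lemma cross2_scaleR_left: "cross2 (r *\<^sub>R x) v = r * cross2 x v"
  by (simp add: cross2_def algebra_simps)

lemma cross2_self [simp]: "cross2 v v = 0"
  by (simp add: cross2_def)

text \<open>The coefficient of \<open>u\<close> when \<open>w\<close> is expanded in the basis \<open>u, v\<close> (Cramer's rule).\<close>

definition basis_coord :: "real^2 \<Rightarrow> real^2 \<Rightarrow> real^2 \<Rightarrow> real" where
  "basis_coord u v w = cross2 w v / cross2 u v"

lemma basis_coord_combination:
  assumes "cross2 u v \<noteq> 0"
  shows "basis_coord u v (s *\<^sub>R u + t *\<^sub>R v) = s"
  using assms by (simp add: basis_coord_def cross2_add_left cross2_scaleR_left)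

lemma basis_coord_decomp:
  assumes "cross2 u v \<noteq> 0"
  shows "basis_coord u v w *\<^sub>R u + basis_coord v u w *\<^sub>R v = w"
proof -
  have "basis_coord u v w *\<^sub>R u + basis_coord v u w *\<^sub>R v
      = inverse (cross2 u v) *\<^sub>R (cross2 w v *\<^sub>R u - cross2 w u *\<^sub>R v)"
    by (simp add: basis_coord_def cross2_commute[of v u] divide_inverse algebra_simps)
  also have "cross2 w v *\<^sub>R u - cross2 w u *\<^sub>R v = cross2 u v *\<^sub>R w"
    by (simp add: vec_eq_iff forall_2 cross2_def algebra_simps)
  finally show ?thesis
    using assms by simp
qed

lemma linear_basis_coord: "linear (basis_coord u v)"
  by (rule linearI) (simp_all add: basis_coord_def cross2_add_left cross2_scaleR_left add_divide_distrib)

lemma abs_basis_coord_le: "\<bar>basis_coord u v w\<bar> \<le> norm w * norm v / \<bar>cross2 u v\<bar>"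
  unfolding basis_coord_def abs_divide by (rule divide_right_mono[OF abs_cross2_le]) simp

lemma vec_angle_commute: "vec_angle a b = vec_angle b a"
  by (simp add: vec_angle_def inner_commute mult.commute)

lemma vec_angle_uminus: "vec_angle (- a) (- b) = vec_angle a b"
  by (simp add: vec_angle_def)

lemma cos_vec_angle_bounds:
  assumes "a \<noteq> 0" "b \<noteq> 0"
  shows "-1 \<le> inner a b / (norm a * norm b)" "inner a b / (norm a * norm b) \<le> 1"
proof -
  have "\<bar>inner a b / (norm a * norm b)\<bar> \<le> 1"
    using Cauchy_Schwarz_ineq2[of a b] assms by (simp add: abs_divide divide_le_eq_1)
  then show "-1 \<le> inner a b / (norm a * norm b)" "inner a b / (norm a * norm b) \<le> 1"
    by linarith+
qed

lemma vec_angle_uminus_left: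
  assumes "a \<noteq> 0" "b \<noteq> 0"
  shows "vec_angle (- a) b = pi - vec_angle a b"
  using arccos_minus[OF cos_vec_angle_bounds[OF assms]] by (simp add: vec_angle_def)

lemma sin_half_vec_angle:
  assumes "a \<noteq> 0" "b \<noteq> 0"
  shows "sin (vec_angle a b / 2) = sqrt ((1 - inner a b / (norm a * norm b)) / 2)"
proof -
  define c where "c = inner a b / (norm a * norm b)"
  have c: "-1 \<le> c" "c \<le> 1"
    using cos_vec_angle_bounds[OF assms] by (simp_all add: c_def)
  have "vec_angle a b = arccos c" by (simp add: vec_angle_def c_def)
  then have "cos (vec_angle a b) = c" "0 \<le> vec_angle a b" "vec_angle a b \<le> pi"
    using c by (simp_all add: arccos_lbound arccos_ubound)
  moreover have "cos (vec_angle a b) = 1 - 2 * (sin (vec_angle a b / 2))\<^sup>2"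
    using cos_double_sin[of "vec_angle a b / 2"] by simp
  ultimately have "(sin (vec_angle a b / 2))\<^sup>2 = (1 - c) / 2" "0 \<le> sin (vec_angle a b / 2)"
    by (simp_all add: sin_ge_zero)
  then show ?thesis
    unfolding c_def[symmetric] by (simp add: real_sqrt_unique)
qed

lemma cross2_nonzero_of_vec_angle:
  assumes "a \<noteq> 0" "b \<noteq> 0" "0 < vec_angle a b" "vec_angle a b < pi"
  shows "cross2 a b \<noteq> 0"
proof
  assume "cross2 a b = 0"
  then have "\<bar>inner a b\<bar>\<^sup>2 = (norm a * norm b)\<^sup>2"
    using inner_sq_add_cross2_sq[of a b] by (simp add: power_mult_distrib)
  then have "\<bar>inner a b\<bar> = norm a * norm b"
    by (rule power2_eq_imp_eq) simp_all
  then have "\<bar>inner a b / (norm a * norm b)\<bar> = 1"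
    using assms by (simp add: abs_divide)
  then have "vec_angle a b = arccos 1 \<or> vec_angle a b = arccos (-1)"
    unfolding vec_angle_def by (auto simp: abs_if split: if_splits)
  then show False
    using assms by auto
qed

text \<open>With \<open>c\<close> the cosine of the angle \<open>\<theta>\<close> between \<open>u\<close> and \<open>v\<close>, the vector
  \<open>s u + t v\<close> with \<open>t \<le> s\<close> lies in the half of the angle next to \<open>u\<close>; its distance to the line
  \<open>\<real> u\<close> is therefore at most \<open>sin (\<theta>/2)\<close> times its length.\<close>

lemma norm_diff_proj_le_sin_half:
  fixes u v :: "'a::real_inner"
  assumes "norm u = norm v" "0 \<le> t" "t \<le> s"
  defines "c \<equiv> inner u v / (norm u)\<^sup>2"
  shows "norm (s *\<^sub>R u + t *\<^sub>R v - (s + t * c) *\<^sub>R u) \<le> sqrt ((1 - c) / 2) * norm (s *\<^sub>R u + t *\<^sub>R v)"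
proof -
  define L where "L = (norm u)\<^sup>2"
  have uv: "inner u v = L * c" "inner u u = L" "inner v v = L"
    using assms(1) by (auto simp: c_def L_def power2_norm_eq_inner[symmetric])
  have "\<bar>inner u v\<bar> \<le> L"
    using Cauchy_Schwarz_ineq2[of u v] assms(1) by (simp add: L_def power2_eq_square)
  then have c: "-1 \<le> c \<and> c \<le> 1"
  proof (cases "L = 0")
    case True
    then show ?thesis
      by (simp add: c_def L_def)
  next
    case False
    then have "0 < L"
      by (simp add: L_def)
    with \<open>\<bar>inner u v\<bar> \<le> L\<close> show ?thesis
      using uv(1) mult_le_cancel_left_pos[of L "-1" c] mult_le_cancel_left_pos[of L c 1]
      by (simp add: abs_le_iff)
  qed
  have w: "(norm (s *\<^sub>R u + t *\<^sub>R v))\<^sup>2 = L * (s\<^sup>2 + t\<^sup>2 + 2 * s * t * c)"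
    unfolding power2_norm_eq_inner
    by (simp add: inner_add_left inner_add_right inner_commute[of v u] uv algebra_simps power2_eq_square)
  have "0 \<le> (1 + c) * t"
    using assms(2) c by simp
  then have "0 \<le> (s - t) * ((s - t) + 2 * ((1 + c) * t))"
    using assms(3) by (intro mult_nonneg_nonneg) linarith+
  then have key: "t\<^sup>2 * (1 + c) \<le> (s\<^sup>2 + t\<^sup>2 + 2 * s * t * c) / 2"
    by (simp add: algebra_simps power2_eq_square)
  have "(norm (s *\<^sub>R u + t *\<^sub>R v - (s + t * c) *\<^sub>R u))\<^sup>2 = L * (1 - c) * (t\<^sup>2 * (1 + c))"
    unfolding power2_norm_eq_inner
    by (simp add: inner_add_left inner_add_right inner_diff_left inner_diff_right
        inner_commute[of v u] uv algebra_simps power2_eq_square)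
  also have "\<dots> \<le> L * (1 - c) * ((s\<^sup>2 + t\<^sup>2 + 2 * s * t * c) / 2)"
    using key c by (intro mult_left_mono) (auto simp: L_def)
  also have "\<dots> = ((1 - c) / 2) * (norm (s *\<^sub>R u + t *\<^sub>R v))\<^sup>2"
    unfolding w by (simp add: field_simps)
  finally have "norm (s *\<^sub>R u + t *\<^sub>R v - (s + t * c) *\<^sub>R u)
      \<le> sqrt ((1 - c) / 2 * (norm (s *\<^sub>R u + t *\<^sub>R v))\<^sup>2)"
    by (rule real_le_rsqrt)
  then show ?thesis
    by (simp only: real_sqrt_mult real_sqrt_abs abs_norm_cancel)
qed

lemma dG_pos:
  assumes "open G" "frontier G \<noteq> {}" "z \<in> G"
  shows "0 < dG G z"
  unfolding dG_def using assms
  by (intro infdist_pos_not_in_closed) (auto simp: frontier_def interior_open)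

lemma dG_ge_of_ball_subset:
  assumes "frontier G \<noteq> {}" "ball z r \<subseteq> G"
  shows "r \<le> dG G z"
proof -
  obtain y where y: "y \<in> frontier G" "dG G z = dist z y"
    using infdist_attains_inf[of "frontier G" z] assms(1) by (auto simp: dG_def)
  have "ball z r \<subseteq> interior G"
    using assms(2) by (simp add: interior_maximal)
  then have "y \<notin> ball z r"
    using y(1) by (auto simp: frontier_def)
  then show ?thesis
    using y(2) by simp
qed

lemma dG_le_dist_outside:
  assumes "z \<in> G" "w \<notin> G"
  shows "dG G z \<le> dist z w"
proof -
  obtain f where f: "f \<in> closed_segment z w" "f \<in> frontier G"
    using connected_Int_frontier[of "closed_segment z w" G] assms by auto
  then have "dG G z \<le> dist z f"
    unfolding dG_def by (intro infdist_le)
  also have "\<dots> \<le> dist z w"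
    using dist_in_closed_segment[OF f(1)] by (simp add: dist_commute)
  finally show ?thesis .
qed

lemma qh_admissible_linepath:
  assumes "convex G" "open G" "frontier G \<noteq> {}" "x \<in> G" "y \<in> G"
  shows "qh_admissible G x y (linepath x y)"
proof -
  have seg: "path_image (linepath x y) \<subseteq> G"
    using assms by (simp add: closed_segment_subset)
  have "continuous_on {0..1} (\<lambda>t. norm (y - x) / dG G (linepath x y t))"
  proof (intro continuous_on_divide continuous_on_const)
    show "continuous_on {0..1} (\<lambda>t. dG G (linepath x y t))"
      unfolding dG_def by (intro continuous_intros)
    show "\<forall>t\<in>{0..1}. dG G (linepath x y t) \<noteq> 0"
      using seg dG_pos[OF assms(2,3)] by (force simp: path_image_def)
  qed
  then have "(\<lambda>t. norm (vector_derivative (linepath x y) (at t)) / dG G (linepath x y t))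
      integrable_on {0..1}"
    by (simp add: integrable_continuous_real)
  moreover have "linepath x y piecewise_C1_differentiable_on {0..1}"
    using valid_path_linepath unfolding valid_path_def .
  ultimately show ?thesis
    unfolding qh_admissible_def using seg by simp
qed

lemma has_vector_derivative_ln_dist:
  fixes g :: "real \<Rightarrow> 'a::real_inner"
  assumes "(g has_vector_derivative D) (at t)" "g t \<noteq> v"
  shows "((\<lambda>t. ln (norm (g t - v))) has_vector_derivative
           inner D (sgn (g t - v)) / norm (g t - v)) (at t)"
proof -
  have "((\<lambda>t. g t - v) has_derivative (\<lambda>h. h *\<^sub>R D)) (at t)"
    using assms(1) by (auto simp: has_vector_derivative_def intro!: derivative_eq_intros)
  from has_derivative_compose[OF this has_derivative_norm] assms(2)
  have "((\<lambda>t. norm (g t - v)) has_derivative (\<lambda>h. inner (h *\<^sub>R D) (sgn (g t - v)))) (at t)"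
    by simp
  moreover have "(ln has_derivative (\<lambda>h. inverse (norm (g t - v)) * h)) (at (norm (g t - v)))"
    using DERIV_ln[of "norm (g t - v)"] assms(2) by (simp add: has_field_derivative_def)
  ultimately have "((\<lambda>t. ln (norm (g t - v))) has_derivative
      (\<lambda>h. inverse (norm (g t - v)) * inner (h *\<^sub>R D) (sgn (g t - v)))) (at t)"
    by (rule has_derivative_compose)
  then show ?thesis
    unfolding has_vector_derivative_def
    by (rule has_derivative_eq_rhs) (simp add: fun_eq_iff divide_inverse)
qed

lemma has_integral_ln_dist:
  fixes g :: "real \<Rightarrow> 'a::real_inner"
  assumes "finite K" "u0 \<le> u1"
    and D: "\<And>t. t \<in> {u0<..<u1} - K \<Longrightarrow> (g has_vector_derivative D t) (at t)"
    and "continuous_on {u0..u1} g" and nz: "\<And>t. t \<in> {u0..u1} \<Longrightarrow> g t \<noteq> v"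
  shows "((\<lambda>t. if t \<in> K then 0 else inner (D t) (sgn (g t - v)) / norm (g t - v))
           has_integral (ln (norm (g u1 - v)) - ln (norm (g u0 - v)))) {u0..u1}"
proof (rule fundamental_theorem_of_calculus_interior_strong[OF assms(1,2)])
  show "continuous_on {u0..u1} (\<lambda>t. ln (norm (g t - v)))"
    using assms(4) nz by (intro continuous_intros) auto
next
  fix t assume t: "t \<in> {u0<..<u1} - K"
  then show "((\<lambda>t. ln (norm (g t - v))) has_vector_derivative
      (if t \<in> K then 0 else inner (D t) (sgn (g t - v)) / norm (g t - v))) (at t)"
    using D[OF t] nz[of t] by (simp add: has_vector_derivative_ln_dist)
qed

lemma abs_inner_sgn_div_le:
  assumes "0 < d" "d \<le> \<sigma> * norm w"
  shows "\<bar>inner D (sgn w) / norm w\<bar> \<le> \<sigma> * (norm D / d)"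
proof -
  have "0 < \<sigma> * norm w"
    using assms by linarith
  then have "0 < \<sigma>" "0 < norm w"
    by (simp_all add: zero_less_mult_iff)
  have "\<bar>inner D (sgn w)\<bar> \<le> norm D"
    using Cauchy_Schwarz_ineq2[of D "sgn w"] \<open>0 < norm w\<close> by (simp add: norm_sgn)
  then have "\<bar>inner D (sgn w) / norm w\<bar> \<le> norm D / norm w"
    by (simp add: abs_divide divide_right_mono)
  also have "\<dots> \<le> norm D / (d / \<sigma>)"
    using assms \<open>0 < \<sigma>\<close> \<open>0 < norm w\<close>
    by (intro divide_left_mono) (simp_all add: pos_divide_le_eq mult.commute)
  finally show ?thesis
    by (simp add: mult.commute)
qed

lemma ln_dist_change_le_qh_integral:
  assumes adm: "qh_admissible G x y g" and u: "0 \<le> u0" "u0 \<le> u1" "u1 \<le> 1"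
    and pos: "\<And>z. z \<in> G \<Longrightarrow> 0 < dG G z"
    and near: "\<And>z. z \<in> G \<Longrightarrow> dG G z \<le> \<sigma> * norm (z - v)"
  shows "\<bar>ln (norm (g u1 - v)) - ln (norm (g u0 - v))\<bar>
           \<le> \<sigma> * integral {u0..u1} (\<lambda>t. norm (vector_derivative g (at t)) / dG G (g t))"
proof -
  define f where "f = (\<lambda>t. norm (vector_derivative g (at t)) / dG G (g t))"
  obtain K D where K: "finite K"
    and D: "\<And>t. t \<in> {0..1} - K \<Longrightarrow> (g has_vector_derivative D t) (at t)"
    using adm unfolding qh_admissible_def piecewise_C1_differentiable_on_def C1_differentiable_on_def
    by blast
  define H where "H t = (if t \<in> K then 0 else inner (D t) (sgn (g t - v)) / norm (g t - v))" for t
  have uI: "{u0..u1} \<subseteq> {0..1}"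
    using u by auto
  have gG: "g t \<in> G" if "t \<in> {u0..u1}" for t
    using adm that uI by (auto simp: qh_admissible_def path_image_def)
  have pos_dist: "0 < \<sigma> * norm (g t - v)" if "t \<in> {u0..u1}" for t
    using pos[OF gG[OF that]] near[OF gG[OF that]] by linarith
  have "continuous_on {u0..u1} g"
    using adm uI by (auto simp: qh_admissible_def path_def intro: continuous_on_subset)
  then have ftc: "(H has_integral (ln (norm (g u1 - v)) - ln (norm (g u0 - v)))) {u0..u1}"
    unfolding H_def using D uI pos_dist
    by (intro has_integral_ln_dist[OF K u(2)]) (auto simp: zero_less_mult_iff)
  have H_le: "norm (H t) \<le> \<sigma> * f t" if t: "t \<in> {u0..u1}" for t
  proof (cases "t \<in> K")
    case True
    then show ?thesis
      using pos[OF gG[OF t]] pos_dist[OF t] by (simp add: H_def f_def zero_less_mult_iff)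
  next
    case False
    then have "vector_derivative g (at t) = D t"
      using D t uI by (auto intro: vector_derivative_at)
    then show ?thesis
      using abs_inner_sgn_div_le[OF pos near, OF gG[OF t] gG[OF t]] False by (simp add: H_def f_def)
  qed
  have "f integrable_on {0..1}"
    using adm by (simp add: qh_admissible_def f_def)
  then have f_int: "f integrable_on {u0..u1}"
    by (rule integrable_subinterval_real[OF _ uI])
  have "\<bar>ln (norm (g u1 - v)) - ln (norm (g u0 - v))\<bar> = norm (integral {u0..u1} H)"
    using ftc by (simp add: integral_unique)
  also have "\<dots> \<le> integral {u0..u1} (\<lambda>t. \<sigma> * f t)"
    using ftc H_le integrable_on_mult_right[OF f_int]
    by (intro integral_norm_bound_integral) (auto simp: has_integral_integrable)
  also have "\<dots> = \<sigma> * integral {u0..u1} f"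
    using integral_mult[OF f_int] by simp
  finally show ?thesis
    by (simp add: f_def)
qed

lemma qh_length_ge_two_vertices:
  assumes adm: "qh_admissible G x y g"
    and pos: "\<And>z. z \<in> G \<Longrightarrow> 0 < dG G z"
    and near_v: "\<And>z. z \<in> G \<Longrightarrow> dG G z \<le> \<sigma> * norm (z - v)"
    and near_w: "\<And>z. z \<in> G \<Longrightarrow> dG G z \<le> \<sigma> * norm (z - w)"
    and "v \<noteq> w" and x: "norm (x - v) \<le> norm (x - w)" and y: "norm (y - w) \<le> norm (y - v)"
  shows "2 * ln (dist v w / 2) - ln (norm (x - v)) - ln (norm (y - w)) \<le> \<sigma> * qh_length G g"
proof -
  define f where "f = (\<lambda>t. norm (vector_derivative g (at t)) / dG G (g t))"
  have g01: "g 0 = x" "g 1 = y" "continuous_on {0..1} g"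
    using adm by (auto simp: qh_admissible_def pathstart_def pathfinish_def path_def)
  have "continuous_on {0..1} (\<lambda>t. norm (g t - v) - norm (g t - w))"
    using g01(3) by (intro continuous_intros)
  then have "\<exists>m. 0 \<le> m \<and> m \<le> 1 \<and> norm (g m - v) - norm (g m - w) = 0"
    using IVT'[of "\<lambda>t. norm (g t - v) - norm (g t - w)" 0 0 1] x y g01(1,2) by simp
  then obtain m where m: "0 \<le> m" "m \<le> 1" "norm (g m - v) = norm (g m - w)"
    by auto
  have gm: "g m \<in> G"
    using adm m by (auto simp: qh_admissible_def path_image_def)
  have "0 < \<sigma> * norm (g m - v)"
    using pos[OF gm] near_v[OF gm] by linarith
  then have "0 < norm (g m - v)"
    by (auto simp: zero_less_mult_iff)
  moreover have "dist v w / 2 \<le> norm (g m - v)"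
    using dist_triangle3[of v w "g m"] m(3) by (simp add: dist_norm)
  ultimately have mid: "ln (dist v w / 2) \<le> ln (norm (g m - v))"
    using \<open>v \<noteq> w\<close> by simp
  have "\<bar>ln (norm (g m - v)) - ln (norm (g 0 - v))\<bar> \<le> \<sigma> * integral {0..m} f"
    unfolding f_def by (rule ln_dist_change_le_qh_integral[OF adm order_refl m(1,2) pos near_v])
  moreover have "\<bar>ln (norm (g 1 - w)) - ln (norm (g m - w))\<bar> \<le> \<sigma> * integral {m..1} f"
    unfolding f_def by (rule ln_dist_change_le_qh_integral[OF adm m(1,2) order_refl pos near_w])
  moreover have f_int: "f integrable_on {0..1}"
    using adm by (simp add: qh_admissible_def f_def)
  then have "\<sigma> * qh_length G g = \<sigma> * integral {0..m} f + \<sigma> * integral {m..1} f"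
    using Henstock_Kurzweil_Integration.integral_combine[OF m(1,2) f_int]
    by (simp add: qh_length_def f_def flip: distrib_left)
  ultimately show ?thesis
    using mid unfolding m(3) g01(1,2) abs_le_iff by linarith
qed

lemma kG_ge_two_vertices:
  assumes G: "open G" "convex G" "frontier G \<noteq> {}" and xy: "x \<in> G" "y \<in> G"
    and near_v: "\<And>z. z \<in> G \<Longrightarrow> dG G z \<le> \<sigma> * norm (z - v)"
    and near_w: "\<And>z. z \<in> G \<Longrightarrow> dG G z \<le> \<sigma> * norm (z - w)"
    and "v \<noteq> w" and "norm (x - v) \<le> norm (x - w)" and "norm (y - w) \<le> norm (y - v)"
  shows "2 * ln (dist v w / 2) - ln (norm (x - v)) - ln (norm (y - w)) \<le> \<sigma> * kG G x y"
proof -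
  let ?c = "2 * ln (dist v w / 2) - ln (norm (x - v)) - ln (norm (y - w))"
  have pos: "\<And>z. z \<in> G \<Longrightarrow> 0 < dG G z"
    using dG_pos[OF G(1,3)] .
  have "0 < \<sigma> * norm (x - v)"
    using pos[OF xy(1)] near_v[OF xy(1)] by linarith
  then have "0 < \<sigma>"
    by (auto simp: zero_less_mult_iff)
  have "?c / \<sigma> \<le> Inf {qh_length G g | g. qh_admissible G x y g}"
  proof (rule cInf_greatest)
    show "{qh_length G g | g. qh_admissible G x y g} \<noteq> {}"
      using qh_admissible_linepath[OF G(2,1,3) xy] by blast
  next
    fix l assume "l \<in> {qh_length G g | g. qh_admissible G x y g}"
    then show "?c / \<sigma> \<le> l"
      using qh_length_ge_two_vertices[OF _ pos near_v near_w] assms(8-) \<open>0 < \<sigma>\<close>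
      by (auto simp: divide_le_eq mult.commute)
  qed
  then show ?thesis
    using \<open>0 < \<sigma>\<close> by (simp add: kG_def divide_le_eq mult.commute)
qed

lemma le_of_affine_le_at_top:
  fixes K A c d :: real
  assumes "eventually (\<lambda>l. K * l + c \<le> A * l + d) at_top"
  shows "K \<le> A"
proof (rule ccontr)
  assume "\<not> K \<le> A"
  obtain L where L: "\<And>l. L \<le> l \<Longrightarrow> K * l + c \<le> A * l + d"
    using assms by (auto simp: eventually_at_top_linorder)
  define l where "l = max L ((d - c + 1) / (K - A))"
  have "(K - A) * l \<le> d - c"
    using L[of l] by (simp add: l_def algebra_simps)
  moreover have "(K - A) * ((d - c + 1) / (K - A)) \<le> (K - A) * l"
    using \<open>\<not> K \<le> A\<close> by (intro mult_left_mono) (auto simp: l_def)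
  ultimately show False
    using \<open>\<not> K \<le> A\<close> by simp
qed

locale parallelogram_domain =
  fixes p a b :: "real^2" and G :: "(real^2) set"
  assumes cross2_nonzero: "cross2 a b \<noteq> 0"
    and G_eq: "G = interior (convex hull {p, p + a, p + a + b, p + b})"
begin

abbreviation acoord :: "real^2 \<Rightarrow> real" where
  "acoord z \<equiv> basis_coord a b (z - p)"

abbreviation bcoord :: "real^2 \<Rightarrow> real" where
  "bcoord z \<equiv> basis_coord b a (z - p)"

lemma cross2_swap_nonzero: "cross2 b a \<noteq> 0"
  using cross2_nonzero by (simp add: cross2_commute[of b a])

lemma swap_sides: "parallelogram_domain p b a G"
proof
  show "cross2 b a \<noteq> 0"
    by (rule cross2_swap_nonzero)
  have "{p, p + b, p + b + a, p + a} = {p, p + a, p + a + b, p + b}"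
    by (auto simp: algebra_simps)
  then show "G = interior (convex hull {p, p + b, p + b + a, p + a})"
    using G_eq by simp
qed

lemma opposite_vertex: "parallelogram_domain (p + a + b) (- a) (- b) G"
proof
  show "cross2 (- a) (- b) \<noteq> 0"
    using cross2_nonzero by (simp add: cross2_def)
  have "{p + a + b, p + a + b + - a, p + a + b + - a + - b, p + a + b + - b}
      = {p, p + a, p + a + b, p + b}"
    by (auto simp: algebra_simps)
  then show "G = interior (convex hull
      {p + a + b, p + a + b + - a, p + a + b + - a + - b, p + a + b + - b})"
    using G_eq by simp
qed

lemma adjacent_vertex: "parallelogram_domain (p + a) (- a) b G"
proof
  show "cross2 (- a) b \<noteq> 0"
    using cross2_nonzero by (simp add: cross2_def)
  have "{p + a, p + a + - a, p + a + - a + b, p + a + b} = {p, p + a, p + a + b, p + b}"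
    by auto
  then show "G = interior (convex hull {p + a, p + a + - a, p + a + - a + b, p + a + b})"
    using G_eq by simp
qed

lemma sides_nonzero: "a \<noteq> 0" "b \<noteq> 0"
  using cross2_nonzero by (auto simp: cross2_def)

lemma coord_decomp: "p + acoord z *\<^sub>R a + bcoord z *\<^sub>R b = z"
  using basis_coord_decomp[OF cross2_nonzero, of "z - p"] by (simp add: algebra_simps)

lemma coord_combination: "acoord (p + s *\<^sub>R a + t *\<^sub>R b) = s" "bcoord (p + s *\<^sub>R a + t *\<^sub>R b) = t"
  using basis_coord_combination[OF cross2_nonzero, of s t]
    basis_coord_combination[OF cross2_swap_nonzero, of t s]
  by (simp_all add: add.commute)

lemma convex_coord_box: "convex {z. acoord z \<in> {0..1} \<and> bcoord z \<in> {0..1}}"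
proof (rule convexI)
  fix x y and u v :: real
  assume xy: "x \<in> {z. acoord z \<in> {0..1} \<and> bcoord z \<in> {0..1}}"
    "y \<in> {z. acoord z \<in> {0..1} \<and> bcoord z \<in> {0..1}}"
    and uv: "0 \<le> u" "0 \<le> v" "u + v = 1"
  have "u *\<^sub>R x + v *\<^sub>R y - p = u *\<^sub>R (x - p) + v *\<^sub>R (y - p) + (u + v - 1) *\<^sub>R p"
    by (simp add: algebra_simps)
  then have "basis_coord c d (u *\<^sub>R x + v *\<^sub>R y - p)
      = u * basis_coord c d (x - p) + v * basis_coord c d (y - p)" for c d
    using uv(3) linear_basis_coord[of c d] by (simp add: linear_add linear_scale)
  then show "u *\<^sub>R x + v *\<^sub>R y \<in> {z. acoord z \<in> {0..1} \<and> bcoord z \<in> {0..1}}"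
    using xy uv by (simp add: convex_bound_le)
qed

lemma convex_hull_eq:
  "convex hull {p, p + a, p + a + b, p + b} = {z. acoord z \<in> {0..1} \<and> bcoord z \<in> {0..1}}"
  (is "?H = ?P")
proof
  have "convex ?P"
    by (rule convex_coord_box)
  moreover have "{p, p + a, p + a + b, p + b} \<subseteq> ?P"
    using coord_combination[of 0 0] coord_combination[of 1 0]
      coord_combination[of 1 1] coord_combination[of 0 1]
    by (simp add: add.assoc)
  ultimately show "?H \<subseteq> ?P"
    by (rule hull_minimal[rotated])
next
  show "?P \<subseteq> ?H"
  proof
    fix z assume "z \<in> ?P"
    then have st: "acoord z \<in> {0..1}" "bcoord z \<in> {0..1}"
      by auto
    have cvx: "convex ?H"
      by simp
    have "p \<in> ?H" "p + a \<in> ?H" "p + a + b \<in> ?H" "p + b \<in> ?H"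
      by (auto intro: hull_inc)
    then have "(1 - acoord z) *\<^sub>R p + acoord z *\<^sub>R (p + a) \<in> ?H"
      "(1 - acoord z) *\<^sub>R (p + b) + acoord z *\<^sub>R (p + a + b) \<in> ?H"
      using st by (auto intro!: convexD[OF cvx])
    then have "(1 - bcoord z) *\<^sub>R ((1 - acoord z) *\<^sub>R p + acoord z *\<^sub>R (p + a))
        + bcoord z *\<^sub>R ((1 - acoord z) *\<^sub>R (p + b) + acoord z *\<^sub>R (p + a + b)) \<in> ?H"
      using st by (auto intro!: convexD[OF cvx])
    moreover have "(1 - bcoord z) *\<^sub>R ((1 - acoord z) *\<^sub>R p + acoord z *\<^sub>R (p + a))
        + bcoord z *\<^sub>R ((1 - acoord z) *\<^sub>R (p + b) + acoord z *\<^sub>R (p + a + b))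
        = p + acoord z *\<^sub>R a + bcoord z *\<^sub>R b"
      by (simp add: algebra_simps)
    ultimately show "z \<in> ?H"
      by (simp add: coord_decomp)
  qed
qed

lemma coords_of_mem:
  assumes "z \<in> G" shows "acoord z \<in> {0..1}" "bcoord z \<in> {0..1}"
  using assms interior_subset[of "convex hull {p, p + a, p + a + b, p + b}"]
  by (auto simp: G_eq convex_hull_eq)

lemma open_G: "open G"
  by (simp add: G_eq)

lemma convex_G: "convex G"
  by (simp add: G_eq)

lemma bounded_G: "bounded G"
  using interior_subset by (auto simp: G_eq intro: bounded_subset compact_imp_bounded
      compact_convex_hull finite_imp_compact)

definition \<kappa> :: real where
  "\<kappa> = \<bar>cross2 a b\<bar> / (norm a + norm b)"

lemma norm_sum_pos: "0 < norm a + norm b"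
  using sides_nonzero(1) by (simp add: add_pos_nonneg)

lemma \<kappa>_pos: "0 < \<kappa>"
  using cross2_nonzero norm_sum_pos by (simp add: \<kappa>_def)

lemma abs_coord_diff_le:
  assumes "dist w z < \<kappa> * e"
  shows "\<bar>acoord w - acoord z\<bar> < e" "\<bar>bcoord w - bcoord z\<bar> < e"
proof -
  have X: "0 < \<bar>cross2 a b\<bar>"
    using cross2_nonzero by simp
  have "\<bar>basis_coord c d (w - z)\<bar> < e"
    if "\<bar>cross2 c d\<bar> = \<bar>cross2 a b\<bar>" "norm d \<le> norm a + norm b" for c d
  proof -
    have "\<bar>basis_coord c d (w - z)\<bar> \<le> dist w z * norm d / \<bar>cross2 a b\<bar>"
      using abs_basis_coord_le[of c d "w - z"] that(1) by (simp add: dist_norm)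
    also have "\<dots> \<le> dist w z * (norm a + norm b) / \<bar>cross2 a b\<bar>"
      using that(2) X by (intro divide_right_mono mult_left_mono) auto
    also have "\<dots> < \<kappa> * e * (norm a + norm b) / \<bar>cross2 a b\<bar>"
      using assms X norm_sum_pos by (intro divide_strict_right_mono mult_strict_right_mono)
    also have "\<dots> = e"
      using X norm_sum_pos by (simp add: \<kappa>_def)
    finally show ?thesis .
  qed
  moreover have "basis_coord c d (w - p) - basis_coord c d (z - p) = basis_coord c d (w - z)" for c d
    using linear_diff[OF linear_basis_coord, of c d "w - p" "z - p"] by simp
  ultimately show "\<bar>acoord w - acoord z\<bar> < e" "\<bar>bcoord w - bcoord z\<bar> < e"
    by (simp_all add: cross2_commute[of b a])
qed

lemma ball_subset_G:
  assumes "e \<le> s" "s \<le> 1 - e" "e \<le> t" "t \<le> 1 - e"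
  shows "ball (p + s *\<^sub>R a + t *\<^sub>R b) (\<kappa> * e) \<subseteq> G"
proof -
  have "ball (p + s *\<^sub>R a + t *\<^sub>R b) (\<kappa> * e) \<subseteq> convex hull {p, p + a, p + a + b, p + b}"
  proof
    fix w assume "w \<in> ball (p + s *\<^sub>R a + t *\<^sub>R b) (\<kappa> * e)"
    then have "\<bar>acoord w - s\<bar> < e" "\<bar>bcoord w - t\<bar> < e"
      using abs_coord_diff_le[of w "p + s *\<^sub>R a + t *\<^sub>R b" e]
      unfolding coord_combination by (simp_all add: dist_commute)
    then show "w \<in> convex hull {p, p + a, p + a + b, p + b}"
      using assms by (simp add: convex_hull_eq abs_less_iff)
  qed
  then show ?thesis
    unfolding G_eq by (rule interior_maximal) simp
qed

lemma frontier_G_nonempty: "frontier G \<noteq> {}"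
proof -
  have "p + (1/2) *\<^sub>R a + (1/2) *\<^sub>R b \<in> G"
    using ball_subset_G[of "1/2" "1/2" "1/2"] \<kappa>_pos by force
  then show ?thesis
    using bounded_G not_bounded_UNIV frontier_eq_empty by blast
qed

lemma bcoord_pos:
  assumes "z \<in> G" shows "0 < bcoord z"
proof -
  obtain r where r: "0 < r" "ball z r \<subseteq> G"
    using assms open_G by (auto simp: open_contains_ball)
  define d where "d = r / (2 * norm b)"
  have "0 < d" "dist z (z - d *\<^sub>R b) < r"
    using r(1) sides_nonzero(2) by (simp_all add: d_def dist_norm)
  then have "z - d *\<^sub>R b \<in> G"
    using r(2) by auto
  then have "0 \<le> bcoord (z - d *\<^sub>R b)"
    using coords_of_mem(2) by simp
  moreover have "z - d *\<^sub>R b = p + acoord z *\<^sub>R a + (bcoord z - d) *\<^sub>R b"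
    by (subst (1) coord_decomp[symmetric, of z]) (simp add: algebra_simps)
  then have "bcoord (z - d *\<^sub>R b) = bcoord z - d"
    by (simp only: coord_combination)
  ultimately show ?thesis
    using \<open>0 < d\<close> by simp
qed

lemma side_not_in_G: "p + l *\<^sub>R a \<notin> G"
  using bcoord_pos coord_combination(2)[of l 0] by fastforce

end

locale rhombus = parallelogram_domain +
  assumes norm_eq: "norm a = norm b"
begin

lemma rhombus_swap_sides: "rhombus p b a G"
  using swap_sides norm_eq by (simp add: rhombus_def rhombus_axioms_def)

lemma rhombus_opposite_vertex: "rhombus (p + a + b) (- a) (- b) G"
  using opposite_vertex norm_eq by (simp add: rhombus_def rhombus_axioms_def)

lemma rhombus_adjacent_vertex: "rhombus (p + a) (- a) b G"
  using adjacent_vertex norm_eq by (simp add: rhombus_def rhombus_axioms_def)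

lemma dG_le_vertex_of_bcoord_le:
  assumes "z \<in> G" "bcoord z \<le> acoord z"
  shows "dG G z \<le> sin (vec_angle a b / 2) * norm (z - p)"
proof -
  define c where "c = inner a b / (norm a)\<^sup>2"
  have z: "z - p = acoord z *\<^sub>R a + bcoord z *\<^sub>R b"
    by (subst (1) coord_decomp[symmetric, of z]) simp
  have "dG G z \<le> dist z (p + (acoord z + bcoord z * c) *\<^sub>R a)"
    by (rule dG_le_dist_outside[OF assms(1) side_not_in_G])
  also have "\<dots> = norm (acoord z *\<^sub>R a + bcoord z *\<^sub>R b - (acoord z + bcoord z * c) *\<^sub>R a)"
    unfolding z[symmetric] by (simp add: dist_norm algebra_simps)
  also have "\<dots> \<le> sqrt ((1 - c) / 2) * norm (acoord z *\<^sub>R a + bcoord z *\<^sub>R b)"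
    unfolding c_def using norm_eq coords_of_mem(2)[OF assms(1)] assms(2)
    by (intro norm_diff_proj_le_sin_half) auto
  also have "\<dots> = sin (vec_angle a b / 2) * norm (z - p)"
    unfolding z[symmetric] using sin_half_vec_angle[OF sides_nonzero] norm_eq
    by (simp add: c_def power2_eq_square)
  finally show ?thesis .
qed

lemma dG_le_vertex:
  assumes "z \<in> G"
  shows "dG G z \<le> sin (vec_angle a b / 2) * norm (z - p)"
proof (cases "bcoord z \<le> acoord z")
  case True
  then show ?thesis
    by (rule dG_le_vertex_of_bcoord_le[OF assms])
next
  case False
  interpret swapped: rhombus p b a G
    by (rule rhombus_swap_sides)
  show ?thesis
    using swapped.dG_le_vertex_of_bcoord_le[OF assms] False by (simp add: vec_angle_commute)
qed

lemma sin_half_angle_pos: "0 < sin (vec_angle a b / 2)"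
  using abs_inner_lt_of_cross2_nonzero[OF cross2_nonzero] sides_nonzero
  by (simp add: sin_half_vec_angle abs_less_iff)

lemma diagonal_nonzero: "a + b \<noteq> 0"
proof
  assume "a + b = 0"
  then have "b = - a"
    by (simp add: add_eq_0_iff)
  then show False
    using cross2_nonzero by (simp add: cross2_def algebra_simps)
qed

lemma diagonal_mem:
  assumes "0 < e" "e \<le> 1/2"
  shows "p + e *\<^sub>R a + e *\<^sub>R b \<in> G" "p + (1 - e) *\<^sub>R a + (1 - e) *\<^sub>R b \<in> G"
  using ball_subset_G[of e e e] ball_subset_G[of e "1 - e" "1 - e"] \<kappa>_pos assms
  by (auto intro: subsetD[OF _ centre_in_ball[THEN iffD2]])

lemma kG_diagonal_ge:
  assumes "0 < e" "e \<le> 1/2"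
  shows "2 * ln (1 / (2 * e)) \<le> sin (vec_angle a b / 2)
           * kG G (p + e *\<^sub>R a + e *\<^sub>R b) (p + (1 - e) *\<^sub>R a + (1 - e) *\<^sub>R b)"
proof -
  interpret opposite: rhombus "p + a + b" "- a" "- b" G
    by (rule rhombus_opposite_vertex)
  let ?x = "p + e *\<^sub>R a + e *\<^sub>R b" and ?y = "p + (1 - e) *\<^sub>R a + (1 - e) *\<^sub>R b"
  define M where "M = norm (a + b)"
  have "0 < M"
    using diagonal_nonzero by (simp add: M_def)
  have diff: "?x - p = e *\<^sub>R (a + b)" "?x - (p + a + b) = (e - 1) *\<^sub>R (a + b)"
    "?y - (p + a + b) = (- e) *\<^sub>R (a + b)" "?y - p = (1 - e) *\<^sub>R (a + b)"
    by (simp_all add: vec_eq_iff algebra_simps)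
  have dist: "norm (?x - p) = e * M" "norm (?x - (p + a + b)) = (1 - e) * M"
    "norm (?y - (p + a + b)) = e * M" "norm (?y - p) = (1 - e) * M"
    unfolding diff using assms by (auto simp: M_def)
  have "dist p (p + a + b) = M"
    unfolding dist_norm M_def by (metis add.assoc add_diff_cancel_left' norm_minus_commute)
  have close: "norm (?x - p) \<le> norm (?x - (p + a + b))" "norm (?y - (p + a + b)) \<le> norm (?y - p)"
    unfolding dist using assms \<open>0 < M\<close> by (simp_all add: mult_right_mono)
  have "p \<noteq> p + a + b"
    using diagonal_nonzero by (simp add: add.assoc)
  from kG_ge_two_vertices[OF open_G convex_G frontier_G_nonempty diagonal_mem[OF assms]
      dG_le_vertex opposite.dG_le_vertex[unfolded vec_angle_uminus] this close]
  have "2 * ln (dist p (p + a + b) / 2) - ln (norm (?x - p)) - ln (norm (?y - (p + a + b)))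
      \<le> sin (vec_angle a b / 2) * kG G ?x ?y" .
  moreover have "ln (M / 2) - ln (e * M) = ln (1 / (2 * e))"
    using assms \<open>0 < M\<close> by (simp add: ln_mult ln_div)
  ultimately show ?thesis
    unfolding dist \<open>dist p (p + a + b) = M\<close> by simp
qed

lemma jG_diagonal_le:
  assumes "0 < e" "e \<le> 1/2"
  shows "jG G (p + e *\<^sub>R a + e *\<^sub>R b) (p + (1 - e) *\<^sub>R a + (1 - e) *\<^sub>R b)
           \<le> ln (1 + norm (a + b) / \<kappa>) - ln e"
proof -
  let ?x = "p + e *\<^sub>R a + e *\<^sub>R b" and ?y = "p + (1 - e) *\<^sub>R a + (1 - e) *\<^sub>R b"
  define M where "M = norm (a + b)"
  have d: "\<kappa> * e \<le> dG G ?x" "\<kappa> * e \<le> dG G ?y"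
    using assms by (intro dG_ge_of_ball_subset frontier_G_nonempty ball_subset_G; simp)+
  moreover have "0 < \<kappa> * e"
    using \<kappa>_pos assms by simp
  moreover have "dist ?x ?y \<le> M"
  proof -
    have "?x - ?y = (2 * e - 1) *\<^sub>R (a + b)"
      by (simp add: vec_eq_iff algebra_simps)
    then show ?thesis
      using assms by (simp add: dist_norm M_def mult_left_le_one_le)
  qed
  ultimately have "dist ?x ?y / min (dG G ?x) (dG G ?y) \<le> M / (\<kappa> * e)"
    by (intro frac_le) (auto simp: M_def)
  also have "\<dots> \<le> (1 + M / \<kappa>) / e - 1"
    using assms \<kappa>_pos by (simp add: field_simps)
  moreover have "0 \<le> dist ?x ?y / min (dG G ?x) (dG G ?y)"
    using d \<open>0 < \<kappa> * e\<close> by (intro divide_nonneg_pos) auto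
  moreover have "0 < 1 + M / \<kappa>"
    using \<kappa>_pos by (intro add_pos_nonneg) (simp_all add: M_def)
  ultimately have "jG G ?x ?y \<le> ln ((1 + M / \<kappa>) / e)"
    unfolding jG_def using \<open>0 < \<kappa> * e\<close> assms
    by (subst ln_le_cancel_iff) (auto simp: M_def)
  then show ?thesis
    using \<open>0 < 1 + M / \<kappa>\<close> assms by (simp add: M_def ln_div)
qed

lemma uniformity_bound:
  assumes "0 \<le> A" and uniform: "\<forall>x\<in>G. \<forall>y\<in>G. kG G x y \<le> A * jG G x y"
  shows "2 / sin (vec_angle a b / 2) \<le> A"
proof -
  define \<sigma> where "\<sigma> = sin (vec_angle a b / 2)"
  define C where "C = ln (1 + norm (a + b) / \<kappa>)"
  have "\<forall>\<^sub>F l in at_top. 2 * l + - 2 * ln 2 \<le> (\<sigma> * A) * l + \<sigma> * A * C"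
    using eventually_ge_at_top[of "ln 2"]
  proof eventually_elim
    fix l :: real assume "ln 2 \<le> l"
    define e where "e = exp (- l)"
    have "0 < e"
      by (simp add: e_def)
    have "e \<le> exp (- ln 2)"
      using \<open>ln 2 \<le> l\<close> by (simp add: e_def)
    then have "e \<le> 1/2"
      by (simp add: exp_minus)
    let ?x = "p + e *\<^sub>R a + e *\<^sub>R b" and ?y = "p + (1 - e) *\<^sub>R a + (1 - e) *\<^sub>R b"
    have "2 * (l - ln 2) = 2 * ln (1 / (2 * e))"
      by (simp add: e_def ln_div ln_mult)
    also have "\<dots> \<le> \<sigma> * kG G ?x ?y"
      unfolding \<sigma>_def using \<open>0 < e\<close> \<open>e \<le> 1/2\<close> by (rule kG_diagonal_ge)
    also have "\<dots> \<le> \<sigma> * (A * jG G ?x ?y)"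
      using uniform diagonal_mem[OF \<open>0 < e\<close> \<open>e \<le> 1/2\<close>] sin_half_angle_pos
      by (intro mult_left_mono) (auto simp: \<sigma>_def)
    also have "\<dots> \<le> \<sigma> * (A * (C + l))"
      using jG_diagonal_le[OF \<open>0 < e\<close> \<open>e \<le> 1/2\<close>] \<open>0 \<le> A\<close> sin_half_angle_pos
      by (intro mult_left_mono) (auto simp: \<sigma>_def C_def e_def)
    finally show "2 * l + - 2 * ln 2 \<le> (\<sigma> * A) * l + \<sigma> * A * C"
      by (simp add: algebra_simps)
  qed
  then have "2 \<le> \<sigma> * A"
    by (rule le_of_affine_le_at_top)
  then show ?thesis
    using sin_half_angle_pos by (simp add: \<sigma>_def divide_le_eq mult.commute)
qed

end

lemma rhombus_of_vec_angle:
  assumes "a \<noteq> 0" "norm a = norm b" "0 < vec_angle a b" "vec_angle a b < pi"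
    and "G = interior (convex hull {p, p + a, p + a + b, p + b})"
  shows "rhombus p a b G"
proof
  have "b \<noteq> 0"
    using assms(1,2) by auto
  then show "cross2 a b \<noteq> 0"
    using assms by (intro cross2_nonzero_of_vec_angle) auto
qed (use assms in auto)

theorem theorem5p4:
  fixes G :: "(real ^ 2) set" and \<alpha> :: real
  assumes "rhombus_domain G \<alpha>"
  shows "uniformity_constant G \<ge> ereal (2 / sin (\<alpha> / 2))"
proof -
  obtain p a b where a: "a \<noteq> 0" "norm a = norm b" "0 < vec_angle a b" "vec_angle a b < pi"
    and G: "G = interior (convex hull {p, p + a, p + a + b, p + b})"
    and \<alpha>: "\<alpha> = min (vec_angle a b) (pi - vec_angle a b)"
    using assms unfolding rhombus_domain_def by blast
  have R: "rhombus p a b G"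
    using a G by (rule rhombus_of_vec_angle)
  have "b \<noteq> 0"
    using a(1,2) by auto
  have "2 / sin (\<alpha> / 2) \<le> A" if "1 \<le> A" "\<forall>x\<in>G. \<forall>y\<in>G. kG G x y \<le> A * jG G x y" for A
  proof -
    have "2 / sin (vec_angle a b / 2) \<le> A" "2 / sin (vec_angle (- a) b / 2) \<le> A"
      using rhombus.uniformity_bound[OF R _ that(2)]
        rhombus.uniformity_bound[OF rhombus.rhombus_adjacent_vertex[OF R] _ that(2)] that(1)
      by simp_all
    then show ?thesis
      using \<alpha> vec_angle_uminus_left[OF a(1) \<open>b \<noteq> 0\<close>] by (auto simp: min_def)
  qed
  then show ?thesis
    unfolding uniformity_constant_def by (auto simp: le_Inf_iff)
qed

end
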